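(* Let $\mathcal{M}$ be a set of models, $c:\mathcal{M}\to(0,\infty)$ a cost function, $\mathcal{S}$ a step neighborhood function, $m_0$ a base model, and $\bm{\alpha}=(\alpha_1,\alpha_2,\dots)$ a sequence of real weights, as in the context. Let $\lambda>0$. Then $$\min_{m\in\mathcal{M}}\big(c(m)+\lambda\mathcal{L}_{\bm{\alpha}}(m)\big)=\min_{K\ge 0}\Big(\min_{\bm{m}\in\mathcal{P}_K} c(m_K)+\lambda\sum_{k=1}^K\alpha_k c(m_k)\Big),$$ and if $K^*\ge0$ and $\bm{m}^*=(m^*_1,\dots,m^*_{K^*})\in\mathcal{P}_{K^*}$ attain the minimum on the right-hand side, then the model $m^*_{K^*}$ is Pareto optimal with respect to the two objectives $c(\cdot)$ and $\mathcal{L}_{\bm{\alpha}}(\cdot)$ on $\mathcal{M}$ (i.e., there is no $m\in\mathcal{M}$ with $c(m)\le c(m^*_{K^*})$ and $\mathcal{L}_{\bm{\alpha}}(m)\le\mathcal{L}_{\bm{\alpha}}(m^*_{K^*})$ with at least one inequality strict).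
   Context: Setting: $\mathcal{M}$ is a set (of models), $c:\mathcal{M}\to(0,\infty)$ is a cost function, and $\mathcal{S}:\mathcal{M}\to 2^{\mathcal{M}}$ is a step neighborhood function with $\mathcal{S}(m)\neq\emptyset$ for all $m$. A fixed base model $m_0\in\mathcal{M}$ is given. An interpretable path of length $K\ge 0$ is a sequence $\bm{m}=(m_1,\dots,m_K)$ with $m_k\in\mathcal{S}(m_{k-1})$ for $1\le k\le K$; its final model is $m_K$ (which is $m_0$ when $K=0$). $\mathcal{P}_K$ is the set of paths of length $K$, $\mathcal{P}_K(m)=\{\bm{m}\in\mathcal{P}_K:m_K=m\}$, $\mathcal{P}(m)=\bigcup_{K\ge0}\mathcal{P}_K(m)$. For a weight sequence $\bm{\alpha}$, the path loss is $\mathcal{L}_{\bm{\alpha}}(\bm{m})=\sum_{k=1}^{|\bm{m}|}\alpha_k c(m_k)$ (empty sum $=0$), and the model loss is $\mathcal{L}_{\bm{\alpha}}(m)=\min_{\bm{m}\in\mathcal{P}(m)}\mathcal{L}_{\bm{\alpha}}(\bm{m})$ if $\mathcal{P}(m)\neq\emptyset$ and $\infty$ otherwise. *)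

theory Defs
  imports Complex_Main "HOL-Library.Extended_Real"
begin

text \<open>The set of models M is rendered as the type 'm (UNIV). A path (m_1,...,m_K) is a
  list; is_path S m0 ms means m_1 \<in> S m0 and m_k \<in> S m_(k-1).\<close>

fun is_path :: "('m \<Rightarrow> 'm set) \<Rightarrow> 'm \<Rightarrow> 'm list \<Rightarrow> bool" where
  "is_path S m [] = True"
| "is_path S m (x # xs) = (x \<in> S m \<and> is_path S x xs)"

definition paths :: "('m \<Rightarrow> 'm set) \<Rightarrow> 'm \<Rightarrow> nat \<Rightarrow> 'm list set" where
  "paths S m0 K = {ms. is_path S m0 ms \<and> length ms = K}"

definition final_model :: "'m \<Rightarrow> 'm list \<Rightarrow> 'm" where
  "final_model m0 ms = last (m0 # ms)"

text \<open>Path loss: sum_{k=1}^{K} alpha_k c(m_k); alpha is indexed from 1.\<close>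
definition path_loss :: "(nat \<Rightarrow> real) \<Rightarrow> ('m \<Rightarrow> real) \<Rightarrow> 'm list \<Rightarrow> real" where
  "path_loss \<alpha> c ms = (\<Sum>k=1..length ms. \<alpha> k * c (ms ! (k - 1)))"

text \<open>Model loss: infimum (a minimum when attained) of path losses over all paths ending
  at m; equals \<infinity> if there is no such path.\<close>
definition model_loss ::
  "('m \<Rightarrow> 'm set) \<Rightarrow> 'm \<Rightarrow> (nat \<Rightarrow> real) \<Rightarrow> ('m \<Rightarrow> real) \<Rightarrow> 'm \<Rightarrow> ereal" where
  "model_loss S m0 \<alpha> c m =
     (INF ms \<in> {ms. is_path S m0 ms \<and> final_model m0 ms = m}. ereal (path_loss \<alpha> c ms))"

definition pareto_optimal :: "('m \<Rightarrow> ereal) \<Rightarrow> ('m \<Rightarrow> ereal) \<Rightarrow> 'm \<Rightarrow> bool" where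
  "pareto_optimal f g m \<longleftrightarrow>
     \<not> (\<exists>m'. f m' \<le> f m \<and> g m' \<le> g m \<and> (f m' < f m \<or> g m' < g m))"

end

theory Submission
  imports Defs
begin

(* The scalarised objective c m + lam * L(m) of a model is the infimum of
   c(m_K) + lam * L(path) over the paths ending at m, because x \<mapsto> a + lam * x is an
   order isomorphism of the extended reals and so commutes with infima. Taking the
   infimum over all models, resp. over all lengths K, both sides become the infimum over
   all paths. A minimising path certifies that its final model minimises the scalarised
   objective with a finite value, and a minimiser of a positively weighted sum of two
   objectives is Pareto optimal. *)

lemma INF_UNION:
  fixes f :: "'b \<Rightarrow> 'a::complete_lattice"
  shows "(INF x\<in>(\<Union>y\<in>A. B y). f x) = (INF y\<in>A. INF x\<in>B y. f x)"
  by (rule antisym) (auto intro!: INF_greatest INF_lower INF_lower2)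

lemma INF_order_iso:
  fixes h :: "'a::complete_lattice \<Rightarrow> 'b::complete_lattice"
  assumes "mono h" "mono g" "\<And>y. h (g y) = y" "\<And>x. g (h x) = x"
  shows "h (INF x\<in>A. f x) = (INF x\<in>A. h (f x))"
proof (rule antisym)
  show "h (INF x\<in>A. f x) \<le> (INF x\<in>A. h (f x))"
    using mono_Inf[OF \<open>mono h\<close>, of "f ` A"] by (simp add: image_image)
  have "g (INF x\<in>A. h (f x)) \<le> (INF x\<in>A. f x)"
    using mono_Inf[OF \<open>mono g\<close>, of "(\<lambda>x. h (f x)) ` A"]
    by (simp add: image_image assms(4))
  from monoD[OF \<open>mono h\<close> this] show "(INF x\<in>A. h (f x)) \<le> h (INF x\<in>A. f x)"
    by (simp add: assms(3))
qed

lemma ereal_affine_INF: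
  fixes f :: "'x \<Rightarrow> ereal"
  assumes "lam > 0"
  shows "ereal a + ereal lam * (INF x\<in>A. f x) = (INF x\<in>A. ereal a + ereal lam * f x)"
proof (rule INF_order_iso)
  show "mono (\<lambda>y. ereal a + ereal lam * y)"
    using assms by (intro monoI add_left_mono ereal_mult_left_mono) auto
  show "mono (\<lambda>y. ereal (1 / lam) * (y - ereal a))"
    using assms by (intro monoI ereal_mult_left_mono) (auto simp: ereal_minus_mono)
  show "ereal a + ereal lam * (ereal (1 / lam) * (y - ereal a)) = y" for y
    using assms by (cases y) auto
  show "ereal (1 / lam) * (ereal a + ereal lam * y - ereal a) = y" for y
    using assms by (cases y) auto
qed

lemma pareto_optimal_if_minimises_weighted_sum:
  fixes f :: "'m \<Rightarrow> real" and g :: "'m \<Rightarrow> ereal"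
  assumes lam: "lam > 0" and g_finite: "\<bar>g m\<bar> \<noteq> \<infinity>"
    and minimal: "\<And>m'. ereal (f m) + ereal lam * g m \<le> ereal (f m') + ereal lam * g m'"
  shows "pareto_optimal (\<lambda>m. ereal (f m)) g m"
  unfolding pareto_optimal_def
proof
  assume "\<exists>m'. ereal (f m') \<le> ereal (f m) \<and> g m' \<le> g m \<and>
    (ereal (f m') < ereal (f m) \<or> g m' < g m)"
  then obtain m' where le: "f m' \<le> f m" "g m' \<le> g m" and less: "f m' < f m \<or> g m' < g m"
    by auto
  obtain r where r: "g m = ereal r"
    using g_finite by (cases "g m") auto
  have "ereal (f m') + ereal lam * g m' < ereal (f m) + ereal lam * g m"
  proof (cases "g m'")
    case (real s)
    with le less r have "s \<le> r" "f m' < f m \<or> s < r" by auto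
    with le lam have "f m' + lam * s < f m + lam * r"
      by (smt (verit) mult_strict_left_mono mult_left_mono)
    with real r show ?thesis by simp
  qed (use le r lam in auto)
  with minimal[of m'] show False by simp
qed

lemma scalarised_model_loss_eq_INF_paths:
  assumes "lam > 0"
  shows "ereal (c m) + ereal lam * model_loss S m0 \<alpha> c m
    = (INF ms\<in>{ms. is_path S m0 ms \<and> final_model m0 ms = m}.
        ereal (c (final_model m0 ms) + lam * path_loss \<alpha> c ms))"
  unfolding model_loss_def ereal_affine_INF[OF assms]
  by (rule INF_cong) auto

lemma optimal_path_minimises_scalarised_model_loss:
  assumes lam: "lam > 0" and path: "is_path S m0 ms'"
    and opt: "\<And>ms. is_path S m0 ms \<Longrightarrow>
      c (final_model m0 ms') + lam * path_loss \<alpha> c ms'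
      \<le> c (final_model m0 ms) + lam * path_loss \<alpha> c ms"
  defines "J m \<equiv> ereal (c m) + ereal lam * model_loss S m0 \<alpha> c m"
    and "v \<equiv> ereal (c (final_model m0 ms') + lam * path_loss \<alpha> c ms')"
  shows "J (final_model m0 ms') = v" and "J (final_model m0 ms') \<le> J m"
proof -
  note J_INF = J_def scalarised_model_loss_eq_INF_paths[OF lam]
  have lower: "v \<le> J m" for m
    unfolding J_INF v_def using opt by (auto intro!: INF_greatest)
  have "J (final_model m0 ms') \<le> v"
    unfolding J_INF v_def using path by (auto intro: INF_lower)
  with lower show attained: "J (final_model m0 ms') = v"
    by (simp add: antisym)
  from lower show "J (final_model m0 ms') \<le> J m"
    unfolding attained .
qed

theorem proposition1:
  fixes c :: "'m \<Rightarrow> real" and S :: "'m \<Rightarrow> 'm set" and m0 :: 'm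
    and alpha :: "nat \<Rightarrow> real" and lam :: real
  assumes c_pos: "\<And>m. c m > 0"
    and S_ne: "\<And>m. S m \<noteq> {}"
    and lam_pos: "lam > 0"
  shows "(INF m. ereal (c m) + ereal lam * model_loss S m0 alpha c m)
         = (INF K. INF ms \<in> paths S m0 K.
              ereal (c (final_model m0 ms) + lam * path_loss alpha c ms))
         \<and> (\<forall>Kstar. \<forall>msstar \<in> paths S m0 Kstar.
           (\<forall>K. \<forall>ms \<in> paths S m0 K.
              c (final_model m0 msstar) + lam * path_loss alpha c msstar
              \<le> c (final_model m0 ms) + lam * path_loss alpha c ms) \<longrightarrow>
           pareto_optimal (\<lambda>m. ereal (c m)) (model_loss S m0 alpha c) (final_model m0 msstar))"
proof -
  have "(\<Union>m. {ms. is_path S m0 ms \<and> final_model m0 ms = m}) = (\<Union>K. paths S m0 K)"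
    by (auto simp: paths_def)
  then have "(INF m. ereal (c m) + ereal lam * model_loss S m0 alpha c m)
      = (INF K. INF ms \<in> paths S m0 K.
          ereal (c (final_model m0 ms) + lam * path_loss alpha c ms))"
    by (simp only: scalarised_model_loss_eq_INF_paths[OF lam_pos] INF_UNION[symmetric])
  moreover have "pareto_optimal (\<lambda>m. ereal (c m)) (model_loss S m0 alpha c) (final_model m0 ms')"
    if "ms' \<in> paths S m0 K'"
      and "\<forall>K. \<forall>ms \<in> paths S m0 K.
        c (final_model m0 ms') + lam * path_loss alpha c ms'
        \<le> c (final_model m0 ms) + lam * path_loss alpha c ms" for K' ms'
  proof (rule pareto_optimal_if_minimises_weighted_sum[OF lam_pos])
    have path: "is_path S m0 ms'"
      and opt: "\<And>ms. is_path S m0 ms \<Longrightarrow>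
        c (final_model m0 ms') + lam * path_loss alpha c ms'
        \<le> c (final_model m0 ms) + lam * path_loss alpha c ms"
      using that by (auto simp: paths_def)
    note minimal = optimal_path_minimises_scalarised_model_loss[OF lam_pos path opt]
    show "\<bar>model_loss S m0 alpha c (final_model m0 ms')\<bar> \<noteq> \<infinity>"
      using minimal(1) lam_pos by (cases "model_loss S m0 alpha c (final_model m0 ms')") auto
    show "ereal (c (final_model m0 ms')) + ereal lam * model_loss S m0 alpha c (final_model m0 ms')
        \<le> ereal (c m) + ereal lam * model_loss S m0 alpha c m" for m
      by (rule minimal(2))
  qed
  ultimately show ?thesis
    by blast
qed

end
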